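(* Let $S$ be a finite (possibly empty) set of rational primes. Then the action of $\Gamma_S$ on $\mathfrak{X}_S$ is vertex transitive: for every vertex $v$ of $\mathfrak{X}_S$ there is $\gamma\in\Gamma_S$ with $\gamma\, v_0 = v$. Consequently the action of $\overline{\Gamma}_S$ on $\mathfrak{X}_S$ is vertex transitive as well.
   Context: Let $\mathcal{H}$ be the quaternion algebra over $\mathbb{Q}$ with basis $1, I, J, IJ$ and relations $I^2=J^2=-1$, $IJ=-JI$, with reduced norm $\mathrm{Nm}(a+bI+cJ+dIJ)=a^2+b^2+c^2+d^2$. Let $\mathcal{O}$ be the Hurwitz order, the $\mathbb{Z}$-span of $1, I, J, \tfrac12(1+I+J+IJ)$. For a finite set $S$ of primes, let $\mathbb{Z}_S=\mathbb{Z}[1/p : p\in S]$, $m_S=\prod_{p\in S}p$, $\mathcal{O}_S=\mathcal{O}\otimes_{\mathbb{Z}}\mathbb{Z}_S$, $\Gamma_S=\mathcal{O}_S^*$ (the $S$-unit group), and $\overline{\Gamma}_S=\Gamma_S/\mathbb{Z}_S^*$ (units modulo central scalars). For each odd prime $p$ fix an isomorphism $\mathcal{H}\otimes_{\mathbb{Q}}\mathbb{Q}_p\cong \mathrm{M}_2(\mathbb{Q}_p)$ carrying $\mathcal{O}\otimes_{\mathbb{Z}}\mathbb{Z}_p$ onto $\mathrm{M}_2(\mathbb{Z}_p)$; let $\mathfrak{X}_p$ be the Bruhat–Tits tree of $\mathrm{PGL}_2(\mathbb{Q}_p)$ (vertices are homothety classes of $\mathbb{Z}_p$-lattices in $\mathbb{Q}_p^2$,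 two classes adjacent when representatives $L'\subset L$ satisfy $L/L'\cong \mathbb{Z}/p$), on which $\Gamma_S$ acts through $\mathcal{H}^*\subset \mathrm{GL}_2(\mathbb{Q}_p)$, and let $v_{0,p}$ be the class of $\mathbb{Z}_p\oplus\mathbb{Z}_p$. For $p=2$, let $\mathfrak{X}_2$ be a single point $v_{0,2}$ with trivial action. Put $\mathfrak{X}_S=\prod_{p\in S}\mathfrak{X}_p$ with the diagonal action of $\Gamma_S$ (scalars act trivially, so $\overline{\Gamma}_S$ acts); a vertex of $\mathfrak{X}_S$ is a tuple of vertices of the factors, and $v_0=(v_{0,p})_{p\in S}$. *)

theory Defs
  imports Complex_Main "HOL-Computational_Algebra.Primes"
begin

datatype quat = Quat rat rat rat rat  \<comment> \<open>Quat a b c d = a + bI + cJ + d IJ\<close>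

definition qone :: quat where "qone = Quat 1 0 0 0"

fun qadd :: "quat \<Rightarrow> quat \<Rightarrow> quat" where
  "qadd (Quat a1 b1 c1 d1) (Quat a2 b2 c2 d2) = Quat (a1+a2) (b1+b2) (c1+c2) (d1+d2)"

fun qsmult :: "rat \<Rightarrow> quat \<Rightarrow> quat" where
  "qsmult r (Quat a b c d) = Quat (r*a) (r*b) (r*c) (r*d)"

text \<open>Multiplication with I^2 = J^2 = -1, IJ = -JI.\<close>
fun qmul :: "quat \<Rightarrow> quat \<Rightarrow> quat" where
  "qmul (Quat a1 b1 c1 d1) (Quat a2 b2 c2 d2) =
     Quat (a1*a2 - b1*b2 - c1*c2 - d1*d2)
          (a1*b2 + b1*a2 + c1*d2 - d1*c2)
          (a1*c2 - b1*d2 + c1*a2 + d1*b2)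
          (a1*d2 + b1*c2 - c1*b2 + d1*a2)"

fun qnorm :: "quat \<Rightarrow> rat" where
  "qnorm (Quat a b c d) = a^2 + b^2 + c^2 + d^2"

text \<open>The Hurwitz order: Z-span of 1, I, J, (1+I+J+IJ)/2.\<close>
definition hurwitz :: "quat set" where
  "hurwitz = {Quat (of_int x + of_int w / 2) (of_int y + of_int w / 2)
                   (of_int z + of_int w / 2) (of_int w / 2) | x y z w :: int. True}"

definition hurwitz_basis :: "nat \<Rightarrow> quat" where
  "hurwitz_basis i = (if i = 0 then Quat 1 0 0 0 else if i = 1 then Quat 0 1 0 0
                      else if i = 2 then Quat 0 0 1 0 else Quat (1/2) (1/2) (1/2) (1/2))"

definition mS :: "nat set \<Rightarrow> nat" where "mS S = (\<Prod>p\<in>S. p)"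

definition ZS :: "nat set \<Rightarrow> rat set" where
  "ZS S = {of_int a / of_nat (mS S ^ k) | a k. True}"

definition ZS_units :: "nat set \<Rightarrow> rat set" where
  "ZS_units S = {c \<in> ZS S. c \<noteq> 0 \<and> inverse c \<in> ZS S}"

text \<open>O_S = O \<otimes> Z_S, realised inside H as the Z_S-span of O.\<close>
definition OS :: "nat set \<Rightarrow> quat set" where
  "OS S = {qsmult (1 / of_nat (mS S ^ k)) q | q k. q \<in> hurwitz}"

definition GammaS :: "nat set \<Rightarrow> quat set" where
  "GammaS S = {g \<in> OS S. \<exists>h \<in> OS S. qmul g h = qone \<and> qmul h g = qone}"

text \<open>Gamma_S modulo central scalars Z_S^*: its elements are the cosets.\<close>
definition GammaBarS :: "nat set \<Rightarrow> quat set set" where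
  "GammaBarS S = (\<lambda>g. (\<lambda>c. qsmult c g) ` ZS_units S) ` GammaS S"

section \<open>p-adic integers as the inverse limit of Z/p^n\<close>

type_synonym zp_elt = "nat \<Rightarrow> int"

definition zp :: "int \<Rightarrow> zp_elt set" where
  "zp p = {f. (\<forall>n. 0 \<le> f n \<and> f n < p ^ n) \<and> (\<forall>n. f (Suc n) mod p ^ n = f n)}"

definition zp_of_int :: "int \<Rightarrow> int \<Rightarrow> zp_elt" where
  "zp_of_int p k = (\<lambda>n. k mod p ^ n)"

definition zp_add :: "int \<Rightarrow> zp_elt \<Rightarrow> zp_elt \<Rightarrow> zp_elt" where
  "zp_add p a b = (\<lambda>n. (a n + b n) mod p ^ n)"

definition zp_mul :: "int \<Rightarrow> zp_elt \<Rightarrow> zp_elt \<Rightarrow> zp_elt" where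
  "zp_mul p a b = (\<lambda>n. (a n * b n) mod p ^ n)"

datatype m2 = M2 zp_elt zp_elt zp_elt zp_elt  \<comment> \<open>M2 a b c d = [[a,b],[c,d]]\<close>

definition m2_carrier :: "int \<Rightarrow> m2 set" where
  "m2_carrier p = {M2 a b c d | a b c d. a \<in> zp p \<and> b \<in> zp p \<and> c \<in> zp p \<and> d \<in> zp p}"

fun m2_add :: "int \<Rightarrow> m2 \<Rightarrow> m2 \<Rightarrow> m2" where
  "m2_add p (M2 a b c d) (M2 a' b' c' d') =
     M2 (zp_add p a a') (zp_add p b b') (zp_add p c c') (zp_add p d d')"

fun m2_mul :: "int \<Rightarrow> m2 \<Rightarrow> m2 \<Rightarrow> m2" where
  "m2_mul p (M2 a b c d) (M2 a' b' c' d') =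
     M2 (zp_add p (zp_mul p a a') (zp_mul p b c')) (zp_add p (zp_mul p a b') (zp_mul p b d'))
        (zp_add p (zp_mul p c a') (zp_mul p d c')) (zp_add p (zp_mul p c b') (zp_mul p d d'))"

fun m2_smult :: "int \<Rightarrow> zp_elt \<Rightarrow> m2 \<Rightarrow> m2" where
  "m2_smult p s (M2 a b c d) = M2 (zp_mul p s a) (zp_mul p s b) (zp_mul p s c) (zp_mul p s d)"

definition m2_one :: "int \<Rightarrow> m2" where
  "m2_one p = M2 (zp_of_int p 1) (zp_of_int p 0) (zp_of_int p 0) (zp_of_int p 1)"

fun m2_vec :: "int \<Rightarrow> m2 \<Rightarrow> zp_elt \<times> zp_elt \<Rightarrow> zp_elt \<times> zp_elt" where
  "m2_vec p (M2 a b c d) (x, y) = (zp_add p (zp_mul p a x) (zp_mul p b y),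
                                  zp_add p (zp_mul p c x) (zp_mul p d y))"

text \<open>A map psi : O \<rightarrow> M_2(Z_p) whose Z_p-linear extension is an isomorphism of
  rings O \<otimes> Z_p \<cong> M_2(Z_p): psi is additive, multiplicative and unital on O, and
  the images of the Z-basis of O form a Z_p-basis of M_2(Z_p).\<close>
definition hurwitz_iso :: "int \<Rightarrow> (quat \<Rightarrow> m2) \<Rightarrow> bool" where
  "hurwitz_iso p \<psi> \<longleftrightarrow>
     (\<forall>x\<in>hurwitz. \<psi> x \<in> m2_carrier p) \<and>
     (\<forall>x\<in>hurwitz. \<forall>y\<in>hurwitz. \<psi> (qadd x y) = m2_add p (\<psi> x) (\<psi> y)) \<and>
     (\<forall>x\<in>hurwitz. \<forall>y\<in>hurwitz. \<psi> (qmul x y) = m2_mul p (\<psi> x) (\<psi> y)) \<and>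
     \<psi> qone = m2_one p \<and>
     (\<forall>M\<in>m2_carrier p. \<exists>!c :: nat \<Rightarrow> zp_elt. (\<forall>i<4. c i \<in> zp p) \<and> (\<forall>i\<ge>4. c i = (\<lambda>_. 0)) \<and>
        M = m2_add p (m2_add p (m2_smult p (c 0) (\<psi> (hurwitz_basis 0)))
                                (m2_smult p (c 1) (\<psi> (hurwitz_basis 1))))
                     (m2_add p (m2_smult p (c 2) (\<psi> (hurwitz_basis 2)))
                                (m2_smult p (c 3) (\<psi> (hurwitz_basis 3)))))"

text \<open>Z_p-lattices contained in Z_p^2 (every homothety class of lattices in Q_p^2
  has such a representative).  A lattice in Z_p^2 is a Z_p-submodule containing p^n Z_p^2.\<close>
definition zp_lattice :: "int \<Rightarrow> (zp_elt \<times> zp_elt) set \<Rightarrow> bool" where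
  "zp_lattice p L \<longleftrightarrow> L \<subseteq> zp p \<times> zp p \<and> (zp_of_int p 0, zp_of_int p 0) \<in> L \<and>
     (\<forall>u\<in>L. \<forall>v\<in>L. (zp_add p (fst u) (fst v), zp_add p (snd u) (snd v)) \<in> L) \<and>
     (\<forall>s\<in>zp p. \<forall>u\<in>L. (zp_mul p s (fst u), zp_mul p s (snd u)) \<in> L) \<and>
     (\<exists>n. \<forall>x\<in>zp p. \<forall>y\<in>zp p.
         (zp_mul p (zp_of_int p (p ^ n)) x, zp_mul p (zp_of_int p (p ^ n)) y) \<in> L)"

definition zp_scale :: "int \<Rightarrow> nat \<Rightarrow> (zp_elt \<times> zp_elt) set \<Rightarrow> (zp_elt \<times> zp_elt) set" where
  "zp_scale p a L = (\<lambda>u. (zp_mul p (zp_of_int p (p ^ a)) (fst u),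
                          zp_mul p (zp_of_int p (p ^ a)) (snd u))) ` L"

text \<open>Homothety of lattices (contained in Z_p^2); scaling by p-adic units fixes
  lattices, so homothety reduces to p-power scalings.\<close>
definition homothetic :: "int \<Rightarrow> (zp_elt \<times> zp_elt) set \<Rightarrow> (zp_elt \<times> zp_elt) set \<Rightarrow> bool" where
  "homothetic p L L' \<longleftrightarrow> (\<exists>a b. zp_scale p a L = zp_scale p b L')"

definition zp_std :: "int \<Rightarrow> (zp_elt \<times> zp_elt) set" where
  "zp_std p = zp p \<times> zp p"

text \<open>gamma in Gamma_S sends the vertex [L] to the vertex [L'] in the tree at p:
  gamma acts via the Q_p-linear extension of psi; since m_S^k gamma lies in O for
  some k and central scalars act trivially, this is the class of psi(m_S^k gamma) L.\<close>
definition maps_vertex :: "nat set \<Rightarrow> nat \<Rightarrow> (quat \<Rightarrow> m2) \<Rightarrow> quat \<Rightarrow>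
    (zp_elt \<times> zp_elt) set \<Rightarrow> (zp_elt \<times> zp_elt) set \<Rightarrow> bool" where
  "maps_vertex S p \<psi> g L L' \<longleftrightarrow>
     (\<exists>k. qsmult (of_nat (mS S ^ k)) g \<in> hurwitz \<and>
          homothetic (int p) (m2_vec (int p) (\<psi> (qsmult (of_nat (mS S ^ k)) g)) ` L) L')"

end

theory Submission
  imports Defs
begin

text \<open>Let I be the set of Hurwitz quaternions x with psi_p(x) Z_p^2 \<subseteq> L_p for every odd
  p \<in> S. It is a right ideal of the Hurwitz order O containing m_S^K for large K, and O is right
  Euclidean for the reduced norm, so I = g O; as g divides m_S^K in O, g is an S-unit.
  At an odd p \<in> S the lattice psi_p(g) Z_p^2 is all of L_p: since O is dense in M_2(Z_p), every
  v \<in> L_p is psi_p(y) e_1 modulo p^K for some y \<in> O with psi_p(y) Z_p^2 \<subseteq> L_p, and multiplying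
  y by a p-adic unit divisible by high powers of the other primes of S moves it into I = g O.
  So g maps v_0 to the vertex (L_p)_p, and so does every element of its coset modulo Z_S^*, because
  a central scalar replaces a lattice by a homothetic one.\<close>

section \<open>The p-adic integers\<close>

lemma zp_bounds: "f \<in> zp p \<Longrightarrow> 0 \<le> f n \<and> f n < p ^ n"
  by (simp add: zp_def)

lemma zp_mod_self: "f \<in> zp p \<Longrightarrow> f n mod p ^ n = f n"
  using zp_bounds[of f p n] by (intro mod_pos_pos_trivial) auto

lemma zp_mod_power: assumes "f \<in> zp p" shows "f (n + k) mod p ^ n = f n"
proof (induction k)
  case 0
  show ?case using zp_mod_self[OF assms] by simp
next
  case (Suc k)
  have "f (Suc (n + k)) mod p ^ (n + k) = f (n + k)" using assms by (simp add: zp_def)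
  moreover have "p ^ n dvd p ^ (n + k)" by (simp add: power_add)
  ultimately have "f (Suc (n + k)) mod p ^ n = f (n + k) mod p ^ n"
    by (metis mod_mod_cancel)
  then show ?case using Suc by simp
qed

lemma zp_Suc_mod: "f \<in> zp p \<Longrightarrow> f (Suc n) mod p ^ n = f n"
  using zp_mod_power[of f p n 1] by simp

lemma zp_eqI:
  assumes "f \<in> zp p" "g \<in> zp p" "\<And>n. f n mod p ^ n = g n mod p ^ n"
  shows "f = g"
  using assms zp_mod_self by (metis ext)

lemma zpI:
  assumes "p > 1" "\<And>n. f (Suc n) mod p ^ n = f n mod p ^ n" "\<And>n. f n mod p ^ n = f n"
  shows "f \<in> zp p"
  unfolding zp_def
proof (intro CollectI conjI allI)
  fix n
  have "p ^ n > 0" using assms(1) by simp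
  then show "0 \<le> f n" "f n < p ^ n"
    using pos_mod_sign pos_mod_bound assms(3)[of n] by metis+
  show "f (Suc n) mod p ^ n = f n" using assms(2,3) by simp
qed

lemma mod_mult_power_mod: "(x::int) mod (p * p ^ n) mod p ^ n = x mod p ^ n"
  by (rule mod_mod_cancel) simp

lemmas zp_mod_simps = mod_add_left_eq mod_add_right_eq mod_mult_left_eq mod_mult_right_eq
  mod_diff_left_eq mod_diff_right_eq

lemma zp_add_closed: assumes "p > 1" "a \<in> zp p" "b \<in> zp p" shows "zp_add p a b \<in> zp p"
proof (rule zpI[OF assms(1)])
  fix n
  have "(a (Suc n) + b (Suc n)) mod p ^ n = (a n + b n) mod p ^ n"
    by (metis mod_add_eq zp_Suc_mod assms(2,3))
  then show "zp_add p a b (Suc n) mod p ^ n = zp_add p a b n mod p ^ n"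
    by (simp add: zp_add_def mod_mult_power_mod)
qed (simp add: zp_add_def)

lemma zp_mul_closed: assumes "p > 1" "a \<in> zp p" "b \<in> zp p" shows "zp_mul p a b \<in> zp p"
proof (rule zpI[OF assms(1)])
  fix n
  have "(a (Suc n) * b (Suc n)) mod p ^ n = (a n * b n) mod p ^ n"
    by (metis mod_mult_eq zp_Suc_mod assms(2,3))
  then show "zp_mul p a b (Suc n) mod p ^ n = zp_mul p a b n mod p ^ n"
    by (simp add: zp_mul_def mod_mult_power_mod)
qed (simp add: zp_mul_def)

lemma zp_of_int_closed: "p > 1 \<Longrightarrow> zp_of_int p k \<in> zp p"
  by (rule zpI) (simp_all add: zp_of_int_def mod_mult_power_mod)

lemma zp_mul_assoc: "zp_mul p a (zp_mul p b c) = zp_mul p (zp_mul p a b) c"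
  by (rule ext) (simp add: zp_mul_def zp_mod_simps mult.assoc)

lemma zp_mul_of_int: "zp_mul p (zp_of_int p a) (zp_of_int p b) = zp_of_int p (a * b)"
  by (rule ext) (simp add: zp_mul_def zp_of_int_def zp_mod_simps)

lemma zp_mul_one_left: "f \<in> zp p \<Longrightarrow> zp_mul p (zp_of_int p 1) f = f"
  by (rule ext) (simp add: zp_mul_def zp_of_int_def zp_mod_simps zp_mod_self)

lemma zp_divisible_by_power:
  assumes p: "p > 1" and d: "d \<in> zp p" "d K = 0"
  shows "\<exists>z\<in>zp p. d = zp_mul p (zp_of_int p (p ^ K)) z"
proof -
  define z where "z n = (d (n + K) div p ^ K) mod p ^ n" for n
  have dvd: "d (n + K) = p ^ K * (d (n + K) div p ^ K)" for n
  proof -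
    have "d (K + n) mod p ^ K = 0" using zp_mod_power[OF d(1), of K n] d(2) by simp
    then show ?thesis by (simp add: add.commute mod_eq_0_iff_dvd)
  qed
  have "z \<in> zp p"
  proof (rule zpI[OF p])
    fix n
    define t where "t = d (Suc n + K) div p ^ (n + K)"
    have "d (Suc n + K) mod p ^ (n + K) = d (n + K)"
      using zp_mod_power[OF d(1), of "n + K" 1] by simp
    then have t: "d (Suc n + K) = d (n + K) + p ^ (n + K) * t"
      using div_mult_mod_eq[of "d (Suc n + K)" "p ^ (n + K)"] unfolding t_def
      by (simp add: mult.commute)
    have "p ^ K * (d (Suc n + K) div p ^ K) = p ^ K * (d (n + K) div p ^ K + p ^ n * t)"
      using dvd[of "Suc n"] dvd[of n] t by (simp add: power_add algebra_simps)
    then have "d (Suc n + K) div p ^ K = d (n + K) div p ^ K + p ^ n * t"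
      using p by simp
    then show "z (Suc n) mod p ^ n = z n mod p ^ n"
      unfolding z_def by (simp add: mod_mult_power_mod)
  qed (simp add: z_def)
  moreover have "d = zp_mul p (zp_of_int p (p ^ K)) z"
  proof (rule zp_eqI[OF d(1) zp_mul_closed[OF p zp_of_int_closed[OF p] \<open>z \<in> zp p\<close>]])
    fix n
    have "zp_mul p (zp_of_int p (p ^ K)) z n = d (n + K) mod p ^ n"
      by (subst dvd) (simp add: zp_mul_def zp_of_int_def z_def zp_mod_simps)
    then show "d n mod p ^ n = zp_mul p (zp_of_int p (p ^ K)) z n mod p ^ n"
      using zp_mod_power[OF d(1), of n K] by simp
  qed
  ultimately show ?thesis by blast
qed

lemma zp_of_int_invertible:
  assumes p: "p > 1" and cop: "coprime b p"
  shows "\<exists>r\<in>zp p. zp_mul p (zp_of_int p b) r = zp_of_int p 1"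
proof -
  have "\<exists>s. (b * s) mod p ^ n = 1 mod p ^ n" for n
  proof -
    obtain u v where "u * b + v * p ^ n = 1"
      using bezout_int[of b "p ^ n"] cop by auto
    then have "(b * u) mod p ^ n = 1 mod p ^ n"
      by (metis mod_mult_self2 mult.commute)
    then show ?thesis by blast
  qed
  then obtain s where s: "\<And>n. (b * s n) mod p ^ n = 1 mod p ^ n" by metis
  define r where "r n = s n mod p ^ n" for n
  have rc: "(b * r n) mod p ^ n = 1 mod p ^ n" for n
    using s[of n] by (simp add: r_def mod_mult_right_eq)
  have "r \<in> zp p"
  proof (rule zpI[OF p])
    fix n
    have "(b * r (Suc n)) mod p ^ n = (b * r n) mod p ^ n"
      using rc[of "Suc n"] rc[of n] by (metis mod_mult_power_mod power_Suc)
    then have "p ^ n dvd b * (r (Suc n) - r n)"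
      by (simp add: mod_eq_dvd_iff right_diff_distrib)
    then have "p ^ n dvd r (Suc n) - r n"
      using cop by (simp add: coprime_commute coprime_dvd_mult_right_iff)
    then show "r (Suc n) mod p ^ n = r n mod p ^ n" by (simp add: mod_eq_dvd_iff)
  qed (simp add: r_def)
  moreover have "zp_mul p (zp_of_int p b) r = zp_of_int p 1"
    using rc by (intro ext) (simp add: zp_mul_def zp_of_int_def zp_mod_simps)
  ultimately show ?thesis by blast
qed

lemma zp_congruent_level:
  assumes p: "p > 1" and a: "a \<in> zp p" and b: "b \<in> zp p" and ab: "a K = b K"
  shows "\<exists>z\<in>zp p. a = zp_add p b (zp_mul p (zp_of_int p (p ^ K)) z)"
proof -
  define d where "d = zp_add p a (zp_mul p (zp_of_int p (-1)) b)"
  have "d \<in> zp p" unfolding d_def by (intro zp_add_closed zp_mul_closed zp_of_int_closed p a b)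
  moreover have "d K = 0" by (simp add: d_def zp_add_def zp_mul_def zp_of_int_def zp_mod_simps ab)
  ultimately obtain z where z: "z \<in> zp p" "d = zp_mul p (zp_of_int p (p ^ K)) z"
    using zp_divisible_by_power[OF p] by blast
  have "a = zp_add p b d"
    by (rule ext) (simp add: d_def zp_add_def zp_mul_def zp_of_int_def zp_mod_simps zp_mod_self[OF a])
  then show ?thesis using z by blast
qed

abbreviation zp2 :: "int \<Rightarrow> (zp_elt \<times> zp_elt) set" where
  "zp2 p \<equiv> zp p \<times> zp p"

definition zp2_add :: "int \<Rightarrow> zp_elt \<times> zp_elt \<Rightarrow> zp_elt \<times> zp_elt \<Rightarrow> zp_elt \<times> zp_elt" where
  "zp2_add p u w = (zp_add p (fst u) (fst w), zp_add p (snd u) (snd w))"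

definition zp2_smult :: "int \<Rightarrow> zp_elt \<Rightarrow> zp_elt \<times> zp_elt \<Rightarrow> zp_elt \<times> zp_elt" where
  "zp2_smult p s u = (zp_mul p s (fst u), zp_mul p s (snd u))"

lemma zp2_add_closed: "p > 1 \<Longrightarrow> u \<in> zp2 p \<Longrightarrow> w \<in> zp2 p \<Longrightarrow> zp2_add p u w \<in> zp2 p"
  by (auto simp: zp2_add_def intro: zp_add_closed)

lemma zp2_smult_closed: "p > 1 \<Longrightarrow> s \<in> zp p \<Longrightarrow> u \<in> zp2 p \<Longrightarrow> zp2_smult p s u \<in> zp2 p"
  by (auto simp: zp2_smult_def intro: zp_mul_closed)

lemma zp2_smult_one: "u \<in> zp2 p \<Longrightarrow> zp2_smult p (zp_of_int p 1) u = u"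
  by (cases u) (simp add: zp2_smult_def zp_mul_one_left)

lemma zp2_smult_smult: "zp2_smult p s (zp2_smult p t u) = zp2_smult p (zp_mul p s t) u"
  by (simp add: zp2_smult_def zp_mul_assoc)

lemma zp2_smult_of_int_mult:
  "zp2_smult p (zp_of_int p (a * b)) u = zp2_smult p (zp_of_int p a) (zp2_smult p (zp_of_int p b) u)"
  by (simp add: zp2_smult_smult zp_mul_of_int)

lemma zp2_smult_add_right:
  "zp2_smult p s (zp2_add p u w) = zp2_add p (zp2_smult p s u) (zp2_smult p s w)"
  by (simp add: zp2_add_def zp2_smult_def zp_add_def zp_mul_def zp_mod_simps, simp add: algebra_simps)

lemma zp2_smult_of_int_add:
  "zp2_add p (zp2_smult p (zp_of_int p a) u) (zp2_smult p (zp_of_int p b) u)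
     = zp2_smult p (zp_of_int p (a + b)) u"
  by (simp add: zp2_add_def zp2_smult_def zp_add_def zp_mul_def zp_of_int_def zp_mod_simps,
      simp add: algebra_simps)

lemma zp2_smult_of_int_diff:
  "zp2_add p (zp2_smult p (zp_of_int p a) u) (zp2_smult p (zp_of_int p (-1)) (zp2_smult p (zp_of_int p b) u))
     = zp2_smult p (zp_of_int p (a - b)) u"
  by (simp add: zp2_add_def zp2_smult_def zp_add_def zp_mul_def zp_of_int_def zp_mod_simps,
      simp add: algebra_simps)

lemma zp2_add_diff_cancel:
  "a \<in> zp2 p \<Longrightarrow> zp2_add p (zp2_add p a b) (zp2_smult p (zp_of_int p (-1)) b) = a"
  by (cases a) (auto intro!: ext simp: zp2_add_def zp2_smult_def zp_add_def zp_mul_def zp_of_int_def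
      zp_mod_simps zp_mod_self)

lemma zp2_congruent_level:
  assumes p: "p > 1" and a: "a \<in> zp2 p" and b: "b \<in> zp2 p"
    and ab: "fst a K = fst b K" "snd a K = snd b K"
  shows "\<exists>z\<in>zp2 p. a = zp2_add p b (zp2_smult p (zp_of_int p (p ^ K)) z)"
proof -
  obtain z1 where "z1 \<in> zp p" "fst a = zp_add p (fst b) (zp_mul p (zp_of_int p (p ^ K)) z1)"
    using zp_congruent_level[of p "fst a" "fst b" K] p a b ab by auto
  moreover obtain z2 where "z2 \<in> zp p" "snd a = zp_add p (snd b) (zp_mul p (zp_of_int p (p ^ K)) z2)"
    using zp_congruent_level[of p "snd a" "snd b" K] p a b ab by auto
  ultimately show ?thesis
    by (intro bexI[of _ "(z1, z2)"]) (auto simp: zp2_add_def zp2_smult_def prod_eq_iff)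
qed

lemma m2_vec_closed: "p > 1 \<Longrightarrow> A \<in> m2_carrier p \<Longrightarrow> u \<in> zp2 p \<Longrightarrow> m2_vec p A u \<in> zp2 p"
  by (cases u) (auto simp: m2_carrier_def intro!: zp_add_closed zp_mul_closed)

lemma m2_vec_zp2_add: "m2_vec p A (zp2_add p u w) = zp2_add p (m2_vec p A u) (m2_vec p A w)"
  by (cases A; cases u; cases w)
    (simp add: zp2_add_def zp_add_def zp_mul_def zp_mod_simps, simp add: algebra_simps)

lemma m2_vec_zp2_smult: "m2_vec p A (zp2_smult p s u) = zp2_smult p s (m2_vec p A u)"
  by (cases A; cases u)
    (simp add: zp2_smult_def zp_add_def zp_mul_def zp_mod_simps, simp add: algebra_simps)

lemma m2_vec_m2_add: "m2_vec p (m2_add p A B) u = zp2_add p (m2_vec p A u) (m2_vec p B u)"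
  by (cases A; cases B; cases u)
    (simp add: zp2_add_def zp_add_def zp_mul_def zp_mod_simps, simp add: algebra_simps)

lemma m2_vec_m2_mul: "m2_vec p (m2_mul p A B) u = m2_vec p A (m2_vec p B u)"
  by (cases A; cases B; cases u) (simp add: zp_add_def zp_mul_def zp_mod_simps, simp add: algebra_simps)

lemma m2_vec_m2_smult: "m2_vec p (m2_smult p s A) u = zp2_smult p s (m2_vec p A u)"
  by (cases A; cases u)
    (simp add: zp2_smult_def zp_add_def zp_mul_def zp_mod_simps, simp add: algebra_simps)

lemma m2_vec_m2_one: "u \<in> zp2 p \<Longrightarrow> m2_vec p (m2_one p) u = u"
  by (cases u) (auto intro!: ext simp: m2_one_def zp_add_def zp_mul_def zp_of_int_def
      zp_mod_simps zp_mod_self)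

lemma m2_vec_column:
  "m2_vec p (M2 a (zp_of_int p 0) c (zp_of_int p 0)) u = zp2_smult p (fst u) (a, c)"
  by (cases u) (auto intro!: ext simp: zp2_smult_def zp_add_def zp_mul_def zp_of_int_def
      zp_mod_simps mult.commute)

lemma m2_image_add:
  assumes "p > 1" "a \<in> m2_vec p A ` zp2 p" "b \<in> m2_vec p A ` zp2 p"
  shows "zp2_add p a b \<in> m2_vec p A ` zp2 p"
  using assms by (auto simp: m2_vec_zp2_add[symmetric] intro!: imageI zp2_add_closed)

lemma m2_image_smult:
  assumes "p > 1" "s \<in> zp p" "a \<in> m2_vec p A ` zp2 p"
  shows "zp2_smult p s a \<in> m2_vec p A ` zp2 p"
  using assms by (auto simp: m2_vec_zp2_smult[symmetric] intro!: imageI zp2_smult_closed)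

definition qzero :: quat where "qzero = Quat 0 0 0 0"

fun qconj :: "quat \<Rightarrow> quat" where "qconj (Quat a b c d) = Quat a (-b) (-c) (-d)"

definition qsub :: "quat \<Rightarrow> quat \<Rightarrow> quat" where "qsub x y = qadd x (qsmult (-1) y)"

lemma qmul_assoc: "qmul (qmul x y) z = qmul x (qmul y z)"
  by (cases x; cases y; cases z) (simp add: algebra_simps)

lemma qmul_qsub_right: "qmul x (qsub y z) = qsub (qmul x y) (qmul x z)"
  by (cases x; cases y; cases z) (simp add: qsub_def algebra_simps)

lemma qmul_qsmult_right: "qmul x (qsmult r y) = qsmult r (qmul x y)"
  by (cases x; cases y) (simp add: algebra_simps)

lemma qmul_qsmult_left: "qmul (qsmult r x) y = qsmult r (qmul x y)"
  by (cases x; cases y) (simp add: algebra_simps)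

lemma qmul_qconj: "qmul x (qconj x) = qsmult (qnorm x) qone"
  by (cases x) (simp add: qone_def algebra_simps power2_eq_square)

lemma qmul_qconj_left: "qmul (qconj x) x = qsmult (qnorm x) qone"
  by (cases x) (simp add: qone_def algebra_simps power2_eq_square)

lemma qmul_qone [simp]: "qmul x qone = x" "qmul qone x = x"
  by (cases x; simp add: qone_def)+

lemma qsmult_qsmult: "qsmult r (qsmult s x) = qsmult (r * s) x"
  by (cases x) (simp add: algebra_simps)

lemma qsmult_one [simp]: "qsmult 1 x = x"
  by (cases x) simp

lemma qsmult_cancel: "c \<noteq> 0 \<Longrightarrow> qsmult c x = qsmult c y \<Longrightarrow> x = y"
  by (cases x; cases y) simp

lemma qnorm_qmul: "qnorm (qmul x y) = qnorm x * qnorm y"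
  by (cases x; cases y) (simp add: algebra_simps power2_eq_square)

lemma qnorm_nonneg: "qnorm x \<ge> 0"
  by (cases x) simp

lemma qnorm_eq_zero_iff: "qnorm x = 0 \<longleftrightarrow> x = qzero"
  by (cases x) (simp add: qzero_def add_nonneg_eq_0_iff)

lemma qsub_self: "qsub x x = qzero"
  by (cases x) (simp add: qsub_def qzero_def)

lemma qsub_eq_qzero_iff: "qsub x y = qzero \<longleftrightarrow> x = y"
  by (cases x; cases y) (auto simp: qsub_def qzero_def)

lemma qadd_qsub_cancel: "qadd (qsub x y) y = x"
  by (cases x; cases y) (simp add: qsub_def)

lemma qmul_right_inverse_imp_left:
  assumes gr: "qmul g r = qsmult n qone" and g: "g \<noteq> qzero"
  shows "qmul r g = qsmult n qone"
proof -
  have "qsmult (qnorm g) r = qmul (qconj g) (qmul g r)"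
    by (simp add: qmul_assoc[symmetric] qmul_qconj_left qmul_qsmult_left)
  also have "\<dots> = qsmult n (qconj g)"
    by (simp add: gr qmul_qsmult_right)
  finally have "qsmult (qnorm g) (qmul r g) = qsmult n (qmul (qconj g) g)"
    by (metis qmul_qsmult_left)
  also have "\<dots> = qsmult (qnorm g) (qsmult n qone)"
    by (simp add: qmul_qconj_left qsmult_qsmult mult.commute)
  finally show ?thesis
    using g qnorm_eq_zero_iff by (blast intro: qsmult_cancel)
qed

section \<open>The Hurwitz order is right Euclidean\<close>

lemma hurwitzI:
  assumes "a = of_int x + of_int w / 2" "b = of_int y + of_int w / 2"
    "c = of_int z + of_int w / 2" "d = of_int w / 2"
  shows "Quat a b c d \<in> hurwitz"
  unfolding hurwitz_def using assms by blast

lemma hurwitzE: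
  assumes "q \<in> hurwitz"
  obtains x y z w where "q = Quat (of_int x + of_int w / 2) (of_int y + of_int w / 2)
    (of_int z + of_int w / 2) (of_int w / 2)"
  using assms unfolding hurwitz_def by blast

lemma hurwitz_qadd: assumes "q1 \<in> hurwitz" "q2 \<in> hurwitz" shows "qadd q1 q2 \<in> hurwitz"
proof -
  obtain x y z w where 1: "q1 = Quat (of_int x + of_int w / 2) (of_int y + of_int w / 2)
    (of_int z + of_int w / 2) (of_int w / 2)" using assms(1) by (rule hurwitzE)
  obtain u v s t where 2: "q2 = Quat (of_int u + of_int t / 2) (of_int v + of_int t / 2)
    (of_int s + of_int t / 2) (of_int t / 2)" using assms(2) by (rule hurwitzE)
  show ?thesis unfolding 1 2
    by (simp, rule hurwitzI[of _ "x + u" "w + t" _ "y + v" _ "z + s"]) (simp_all add: field_simps)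
qed

lemma hurwitz_qmul: assumes "q1 \<in> hurwitz" "q2 \<in> hurwitz" shows "qmul q1 q2 \<in> hurwitz"
proof -
  obtain x y z w where 1: "q1 = Quat (of_int x + of_int w / 2) (of_int y + of_int w / 2)
    (of_int z + of_int w / 2) (of_int w / 2)" using assms(1) by (rule hurwitzE)
  obtain u v s t where 2: "q2 = Quat (of_int u + of_int t / 2) (of_int v + of_int t / 2)
    (of_int s + of_int t / 2) (of_int t / 2)" using assms(2) by (rule hurwitzE)
  show ?thesis unfolding 1 2
    by (simp only: qmul.simps, rule hurwitzI[of _ "- s*w - s*y - s*z - t*w - t*y + u*x - v*y + v*z"
          "s*w + 2*s*y + t*w + t*x + t*y - t*z + u*w - v*w - 2*v*z"
          _ "- s*w - s*y + t*z + u*y + v*w + v*x + v*z"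
          _ "s*x - s*y - t*y + t*z + u*z + v*w + v*z"]) (simp_all add: field_simps)
qed

lemma hurwitz_qsmult: assumes "q \<in> hurwitz" shows "qsmult (of_int k) q \<in> hurwitz"
proof -
  obtain x y z w where 1: "q = Quat (of_int x + of_int w / 2) (of_int y + of_int w / 2)
    (of_int z + of_int w / 2) (of_int w / 2)" using assms by (rule hurwitzE)
  show ?thesis unfolding 1
    by (simp only: qsmult.simps, rule hurwitzI[of _ "k * x" "k * w" _ "k * y" _ "k * z"])
      (simp_all add: field_simps)
qed

lemma hurwitz_qsub: "x \<in> hurwitz \<Longrightarrow> y \<in> hurwitz \<Longrightarrow> qsub x y \<in> hurwitz"
  unfolding qsub_def using hurwitz_qadd hurwitz_qsmult[of y "-1"] by simp

lemma hurwitz_qone: "qone \<in> hurwitz"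
  unfolding qone_def by (rule hurwitzI[of _ 1 0 _ 0 _ 0]) simp_all

lemma hurwitz_basis_in_hurwitz: "hurwitz_basis i \<in> hurwitz"
  unfolding hurwitz_basis_def
  by (auto intro: hurwitzI[of _ 1 0 _ 0 _ 0] hurwitzI[of _ 0 0 _ 1 _ 0]
      hurwitzI[of _ 0 0 _ 0 _ 1] hurwitzI[of _ 0 1 _ 0 _ 0])

lemma hurwitz_qnorm_Nats: assumes "q \<in> hurwitz" shows "qnorm q \<in> \<nat>"
proof -
  obtain x y z w where q: "q = Quat (of_int x + of_int w / 2) (of_int y + of_int w / 2)
    (of_int z + of_int w / 2) (of_int w / 2)" using assms by (rule hurwitzE)
  define N where "N = x^2 + y^2 + z^2 + w * (x + y + z) + w^2"
  have "qnorm q = of_int N"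
    unfolding q N_def by (simp add: field_simps power2_eq_square)
  moreover have "N \<ge> 0" using qnorm_nonneg[of q] calculation by simp
  ultimately show ?thesis by (metis nonneg_int_cases of_int_of_nat_eq of_nat_in_Nats)
qed

lemma round_error_sq_le: "((x::'a::floor_ceiling) - of_int (round x))^2 \<le> 1/4"
proof -
  have "\<bar>x - of_int (round x)\<bar> \<le> 1/2" using of_int_round_abs_le[of x] by linarith
  then have "\<bar>x - of_int (round x)\<bar>^2 \<le> (1/2)^2" by (rule power_mono) simp
  then show ?thesis by (simp add: power2_eq_square)
qed

lemma round_error_sq_eq:
  assumes "((x::'a::floor_ceiling) - of_int (round x))^2 = 1/4"
  shows "x = of_int (round x) - 1/2"
proof -
  have "(x - of_int (round x))^2 = (1/2)^2" using assms by (simp add: power2_eq_square)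
  then have "x - of_int (round x) = 1/2 \<or> x - of_int (round x) = -1/2"
    by (simp add: power2_eq_iff)
  then show ?thesis using of_int_round_gt[of x] by auto
qed

text \<open>Rounding every coordinate leaves an error of norm less than 1, unless all four errors
  are exactly 1/2; but then the quaternion is itself a Hurwitz quaternion.\<close>
lemma hurwitz_approximation: "\<exists>q\<in>hurwitz. qnorm (qsub z q) < 1"
proof (cases z)
  case (Quat a b c d)
  let ?A = "(a - of_int (round a))^2" and ?B = "(b - of_int (round b))^2"
    and ?C = "(c - of_int (round c))^2" and ?D = "(d - of_int (round d))^2"
  note bounds = round_error_sq_le[of a] round_error_sq_le[of b] round_error_sq_le[of c]
    round_error_sq_le[of d]
  show ?thesis
  proof (cases "?A < 1/4 \<or> ?B < 1/4 \<or> ?C < 1/4 \<or> ?D < 1/4")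
    case True
    let ?q = "Quat (of_int (round a)) (of_int (round b)) (of_int (round c)) (of_int (round d))"
    have "?q \<in> hurwitz"
      by (rule hurwitzI[of _ "round a - round d" "2 * round d" _ "round b - round d" _
            "round c - round d"]) simp_all
    moreover have "qnorm (qsub z ?q) = ?A + ?B + ?C + ?D"
      by (simp add: Quat qsub_def)
    ultimately show ?thesis using True bounds by (intro bexI[of _ ?q]) linarith+
  next
    case False
    then have "?A = 1/4" "?B = 1/4" "?C = 1/4" "?D = 1/4" using bounds by linarith+
    then have e: "a = of_int (round a) - 1/2" "b = of_int (round b) - 1/2"
      "c = of_int (round c) - 1/2" "d = of_int (round d) - 1/2"
      by (simp_all add: round_error_sq_eq)
    have "z \<in> hurwitz"
      unfolding Quat
      by (rule hurwitzI[of _ "round a - round d" "2 * round d - 1" _ "round b - round d" _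
            "round c - round d"]) (subst e; simp add: field_simps)+
    then show ?thesis by (intro bexI[of _ z]) (simp_all add: qsub_self qzero_def)
  qed
qed

lemma hurwitz_division:
  assumes "g \<noteq> qzero"
  shows "\<exists>q\<in>hurwitz. qnorm (qsub x (qmul g q)) < qnorm g"
proof -
  have n: "qnorm g > 0" using assms qnorm_eq_zero_iff[of g] qnorm_nonneg[of g] by auto
  define z where "z = qsmult (1 / qnorm g) (qmul (qconj g) x)"
  have gz: "qmul g z = x"
    using n by (simp add: z_def qmul_qsmult_right qmul_assoc[symmetric] qmul_qconj qmul_qsmult_left
        qsmult_qsmult)
  obtain q where q: "q \<in> hurwitz" "qnorm (qsub z q) < 1" using hurwitz_approximation by blast
  have "qsub x (qmul g q) = qmul g (qsub z q)" by (simp add: qmul_qsub_right gz)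
  then have "qnorm (qsub x (qmul g q)) = qnorm g * qnorm (qsub z q)" by (simp add: qnorm_qmul)
  also have "\<dots> < qnorm g" using q(2) n by simp
  finally show ?thesis using q(1) by blast
qed

lemma hurwitz_right_ideal_principal:
  assumes I: "I \<subseteq> hurwitz"
    and diff: "\<And>x y. x \<in> I \<Longrightarrow> y \<in> I \<Longrightarrow> qsub x y \<in> I"
    and mult: "\<And>x r. x \<in> I \<Longrightarrow> r \<in> hurwitz \<Longrightarrow> qmul x r \<in> I"
    and h: "h \<in> I" "h \<noteq> qzero"
  obtains g where "g \<in> I" "g \<noteq> qzero" "\<forall>x\<in>I. \<exists>r\<in>hurwitz. x = qmul g r"
proof -
  obtain g where g: "g \<in> I" "g \<noteq> qzero"
    and least: "\<And>y. y \<in> I \<Longrightarrow> y \<noteq> qzero \<Longrightarrow> nat \<lfloor>qnorm g\<rfloor> \<le> nat \<lfloor>qnorm y\<rfloor>"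
    using ex_has_least_nat[of "\<lambda>y. y \<in> I \<and> y \<noteq> qzero" h "\<lambda>y. nat \<lfloor>qnorm y\<rfloor>"] h by blast
  have norm_le: "qnorm g \<le> qnorm y" if "y \<in> I" "y \<noteq> qzero" for y
  proof -
    have "qnorm g \<in> \<nat>" "qnorm y \<in> \<nat>"
      using hurwitz_qnorm_Nats g(1) that(1) I by auto
    then obtain m k where "qnorm g = of_nat m" "qnorm y = of_nat k"
      by (auto elim!: Nats_cases)
    then show ?thesis using least[OF that] by simp
  qed
  have "\<exists>r\<in>hurwitz. x = qmul g r" if x: "x \<in> I" for x
  proof -
    obtain q where q: "q \<in> hurwitz" "qnorm (qsub x (qmul g q)) < qnorm g"
      using hurwitz_division[OF g(2)] by blast
    have "qsub x (qmul g q) \<in> I" using diff[OF x mult[OF g(1) q(1)]] .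
    then have "qsub x (qmul g q) = qzero" using norm_le q(2) by force
    then show ?thesis using q(1) by (auto simp: qsub_eq_qzero_iff)
  qed
  then show thesis using that g by blast
qed

lemma zp_lattice_subset: "zp_lattice p L \<Longrightarrow> L \<subseteq> zp2 p"
  unfolding zp_lattice_def by blast

lemma zp_lattice_add: "zp_lattice p L \<Longrightarrow> u \<in> L \<Longrightarrow> w \<in> L \<Longrightarrow> zp2_add p u w \<in> L"
  unfolding zp_lattice_def zp2_add_def by blast

lemma zp_lattice_smult: "zp_lattice p L \<Longrightarrow> s \<in> zp p \<Longrightarrow> u \<in> L \<Longrightarrow> zp2_smult p s u \<in> L"
  unfolding zp_lattice_def zp2_smult_def by blast

lemma zp_lattice_contains_power:
  "zp_lattice p L \<Longrightarrow> \<exists>n. \<forall>w\<in>zp2 p. zp2_smult p (zp_of_int p (p ^ n)) w \<in> L"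
  unfolding zp_lattice_def zp2_smult_def by auto

lemma contains_power_multiple:
  assumes p: "p > 1" and L: "\<forall>w\<in>zp2 p. zp2_smult p (zp_of_int p (p ^ n)) w \<in> L"
    and a: "p ^ n dvd a" and w: "w \<in> zp2 p"
  shows "zp2_smult p (zp_of_int p a) w \<in> L"
proof -
  obtain b where "a = p ^ n * b" using a by blast
  then have "zp2_smult p (zp_of_int p a) w
      = zp2_smult p (zp_of_int p (p ^ n)) (zp2_smult p (zp_of_int p b) w)"
    by (simp add: zp2_smult_of_int_mult)
  then show ?thesis using bspec[OF L zp2_smult_closed[OF p zp_of_int_closed[OF p] w]] by simp
qed

lemma zp_lattice_unit_scale:
  assumes p: "p > 1" and L: "zp_lattice p L" and b: "coprime b p"
  shows "zp2_smult p (zp_of_int p b) ` L = L"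
proof
  show "zp2_smult p (zp_of_int p b) ` L \<subseteq> L"
    using zp_lattice_smult[OF L zp_of_int_closed[OF p]] by blast
  obtain r where r: "r \<in> zp p" "zp_mul p (zp_of_int p b) r = zp_of_int p 1"
    using zp_of_int_invertible[OF p b] by blast
  show "L \<subseteq> zp2_smult p (zp_of_int p b) ` L"
  proof
    fix v assume v: "v \<in> L"
    have "zp2_smult p (zp_of_int p b) (zp2_smult p r v) = zp2_smult p (zp_of_int p 1) v"
      by (simp only: zp2_smult_smult r(2))
    also have "\<dots> = v" using zp2_smult_one v zp_lattice_subset[OF L] by auto
    finally have "v = zp2_smult p (zp_of_int p b) (zp2_smult p r v)" ..
    then show "v \<in> zp2_smult p (zp_of_int p b) ` L"
      using zp_lattice_smult[OF L r(1) v] by (rule image_eqI)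
  qed
qed

lemma zp_scale_eq_image: "zp_scale p a L = zp2_smult p (zp_of_int p (p ^ a)) ` L"
  unfolding zp_scale_def zp2_smult_def ..

lemma zp_scale_zero: assumes "L \<subseteq> zp2 p" shows "zp_scale p 0 L = L"
proof -
  have "zp2_smult p (zp_of_int p 1) u = u" if "u \<in> L" for u
    using zp2_smult_one subsetD[OF assms that] .
  then show ?thesis unfolding zp_scale_eq_image by simp
qed

lemma homothetic_smult:
  assumes p: "prime p" and L: "zp_lattice p L" and a: "a \<noteq> 0"
  shows "homothetic p (zp2_smult p (zp_of_int p a) ` L) L"
proof -
  have p1: "p > 1" using p by (simp add: prime_gt_1_int)
  define e where "e = multiplicity p a"
  obtain b where b: "a = p ^ e * b" "\<not> p dvd b"
    using multiplicity_decompose'[OF a] p unfolding e_def by (metis not_prime_unit)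
  have "zp2_smult p (zp_of_int p a) ` L
      = zp2_smult p (zp_of_int p (p ^ e)) ` zp2_smult p (zp_of_int p b) ` L"
    by (simp add: b(1) zp2_smult_of_int_mult image_image)
  also have "\<dots> = zp_scale p e L"
  proof -
    have "coprime b p" using prime_imp_coprime[OF p b(2)] by (simp add: coprime_commute)
    then show ?thesis by (simp add: zp_lattice_unit_scale[OF p1 L] zp_scale_eq_image)
  qed
  finally have "zp_scale p 0 (zp2_smult p (zp_of_int p a) ` L) = zp_scale p e L"
    using zp2_smult_closed[OF p1 zp_of_int_closed[OF p1]] zp_lattice_subset[OF L]
    by (subst zp_scale_zero) blast+
  then show ?thesis unfolding homothetic_def by blast
qed

section \<open>A splitting of the Hurwitz order at p\<close>

locale hurwitz_splitting =
  fixes p :: int and \<psi> :: "quat \<Rightarrow> m2"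
  assumes p_gt_1: "p > 1" and iso: "hurwitz_iso p \<psi>"
begin

lemma psi_closed: "x \<in> hurwitz \<Longrightarrow> \<psi> x \<in> m2_carrier p"
  using iso unfolding hurwitz_iso_def by blast

lemma psi_vec_closed: "x \<in> hurwitz \<Longrightarrow> u \<in> zp2 p \<Longrightarrow> m2_vec p (\<psi> x) u \<in> zp2 p"
  using m2_vec_closed[OF p_gt_1 psi_closed] by blast

lemma psi_qadd: "x \<in> hurwitz \<Longrightarrow> y \<in> hurwitz \<Longrightarrow>
    m2_vec p (\<psi> (qadd x y)) u = zp2_add p (m2_vec p (\<psi> x) u) (m2_vec p (\<psi> y) u)"
  using iso unfolding hurwitz_iso_def by (simp add: m2_vec_m2_add)

lemma psi_qmul: "x \<in> hurwitz \<Longrightarrow> y \<in> hurwitz \<Longrightarrow>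
    m2_vec p (\<psi> (qmul x y)) u = m2_vec p (\<psi> x) (m2_vec p (\<psi> y) u)"
  using iso unfolding hurwitz_iso_def by (simp add: m2_vec_m2_mul)

lemma psi_qone: "u \<in> zp2 p \<Longrightarrow> m2_vec p (\<psi> qone) u = u"
  using iso m2_vec_m2_one unfolding hurwitz_iso_def by metis

lemma psi_qsub:
  assumes x: "x \<in> hurwitz" and y: "y \<in> hurwitz" and u: "u \<in> zp2 p"
  shows "m2_vec p (\<psi> (qsub x y)) u
    = zp2_add p (m2_vec p (\<psi> x) u) (zp2_smult p (zp_of_int p (-1)) (m2_vec p (\<psi> y) u))"
proof -
  have "m2_vec p (\<psi> x) u = zp2_add p (m2_vec p (\<psi> (qsub x y)) u) (m2_vec p (\<psi> y) u)"
    using psi_qadd[OF hurwitz_qsub[OF x y] y] by (simp add: qadd_qsub_cancel)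
  then show ?thesis
    using zp2_add_diff_cancel[OF psi_vec_closed[OF hurwitz_qsub[OF x y] u]] by simp
qed

lemma psi_qsmult_Suc:
  assumes x: "x \<in> hurwitz" and u: "u \<in> zp2 p"
  shows "m2_vec p (\<psi> (qsmult (of_nat (Suc k)) x)) u
    = zp2_smult p (zp_of_int p (int (Suc k))) (m2_vec p (\<psi> x) u)"
proof (induction k)
  case 0
  show ?case using zp2_smult_one[OF psi_vec_closed[OF x u]] by simp
next
  case (Suc k)
  let ?w = "m2_vec p (\<psi> x) u"
  have "qsmult (of_nat (Suc (Suc k))) x = qadd (qsmult (of_nat (Suc k)) x) x"
    by (cases x) (simp add: algebra_simps)
  moreover have "qsmult (of_nat (Suc k)) x \<in> hurwitz"
    using hurwitz_qsmult[OF x, of "int (Suc k)"] by simp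
  ultimately have "m2_vec p (\<psi> (qsmult (of_nat (Suc (Suc k))) x)) u
      = zp2_add p (zp2_smult p (zp_of_int p (int (Suc k))) ?w) (zp2_smult p (zp_of_int p 1) ?w)"
    using Suc zp2_smult_one[OF psi_vec_closed[OF x u]] by (simp only: psi_qadd[OF _ x])
  also have "\<dots> = zp2_smult p (zp_of_int p (int (Suc k) + 1)) ?w"
    by (rule zp2_smult_of_int_add)
  finally show ?case by simp
qed

lemma psi_qsmult:
  assumes x: "x \<in> hurwitz" and u: "u \<in> zp2 p"
  shows "m2_vec p (\<psi> (qsmult (of_int a) x)) u = zp2_smult p (zp_of_int p a) (m2_vec p (\<psi> x) u)"
proof -
  define k m where "k = nat a" and "m = nat (- a)"
  have a: "a = int (Suc k) - int (Suc m)" by (simp add: k_def m_def)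
  let ?x = "\<lambda>n. qsmult (of_nat (Suc n)) x"
  have "qsmult (of_int a) x = qsub (?x k) (?x m)"
    by (cases x) (simp add: a qsub_def algebra_simps)
  moreover have "?x n \<in> hurwitz" for n
    using hurwitz_qsmult[OF x, of "int (Suc n)"] by simp
  ultimately have "m2_vec p (\<psi> (qsmult (of_int a) x)) u
      = zp2_add p (m2_vec p (\<psi> (?x k)) u) (zp2_smult p (zp_of_int p (-1)) (m2_vec p (\<psi> (?x m)) u))"
    by (simp only: psi_qsub[OF _ _ u])
  also have "\<dots> = zp2_smult p (zp_of_int p (int (Suc k) - int (Suc m))) (m2_vec p (\<psi> x) u)"
    by (simp only: psi_qsmult_Suc[OF x u] zp2_smult_of_int_diff)
  finally show ?thesis by (simp only: a)
qed

text \<open>Truncate the p-adic coordinates of M in the basis psi(hurwitz_basis i) at level K.\<close>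
lemma hurwitz_dense:
  assumes M: "M \<in> m2_carrier p"
  obtains y where "y \<in> hurwitz"
    "\<And>u. u \<in> zp2 p \<Longrightarrow> \<exists>z\<in>zp2 p.
       m2_vec p (\<psi> y) u = zp2_add p (m2_vec p M u) (zp2_smult p (zp_of_int p (p ^ K)) z)"
proof -
  obtain c :: "nat \<Rightarrow> zp_elt" where
    M_eq: "M = m2_add p (m2_add p (m2_smult p (c 0) (\<psi> (hurwitz_basis 0)))
                           (m2_smult p (c 1) (\<psi> (hurwitz_basis 1))))
                  (m2_add p (m2_smult p (c 2) (\<psi> (hurwitz_basis 2)))
                           (m2_smult p (c 3) (\<psi> (hurwitz_basis 3))))"
    using iso M unfolding hurwitz_iso_def by blast
  define b where "b (i::nat) = qsmult (of_int (c i K)) (hurwitz_basis i)" for i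
  have b: "b i \<in> hurwitz" for i
    unfolding b_def by (rule hurwitz_qsmult[OF hurwitz_basis_in_hurwitz])
  define y where "y = qadd (qadd (b 0) (b 1)) (qadd (b 2) (b 3))"
  have y: "y \<in> hurwitz" unfolding y_def using b hurwitz_qadd by blast
  have "\<exists>z\<in>zp2 p. m2_vec p (\<psi> y) u
      = zp2_add p (m2_vec p M u) (zp2_smult p (zp_of_int p (p ^ K)) z)" if u: "u \<in> zp2 p" for u
  proof (rule zp2_congruent_level[OF p_gt_1 psi_vec_closed[OF y u] m2_vec_closed[OF p_gt_1 M u]])
    have "m2_vec p (\<psi> y) u = zp2_add p
        (zp2_add p (zp2_smult p (zp_of_int p (c 0 K)) (m2_vec p (\<psi> (hurwitz_basis 0)) u))
                   (zp2_smult p (zp_of_int p (c 1 K)) (m2_vec p (\<psi> (hurwitz_basis 1)) u)))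
        (zp2_add p (zp2_smult p (zp_of_int p (c 2 K)) (m2_vec p (\<psi> (hurwitz_basis 2)) u))
                   (zp2_smult p (zp_of_int p (c 3 K)) (m2_vec p (\<psi> (hurwitz_basis 3)) u)))"
      unfolding y_def b_def
      by (simp only: psi_qadd psi_qsmult[OF hurwitz_basis_in_hurwitz u] hurwitz_qadd b[unfolded b_def])
    moreover have "m2_vec p M u = zp2_add p
        (zp2_add p (zp2_smult p (c 0) (m2_vec p (\<psi> (hurwitz_basis 0)) u))
                   (zp2_smult p (c 1) (m2_vec p (\<psi> (hurwitz_basis 1)) u)))
        (zp2_add p (zp2_smult p (c 2) (m2_vec p (\<psi> (hurwitz_basis 2)) u))
                   (zp2_smult p (c 3) (m2_vec p (\<psi> (hurwitz_basis 3)) u)))"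
      unfolding M_eq by (simp only: m2_vec_m2_add m2_vec_m2_smult)
    ultimately show "fst (m2_vec p (\<psi> y) u) K = fst (m2_vec p M u) K"
      "snd (m2_vec p (\<psi> y) u) K = snd (m2_vec p M u) K"
      by (simp_all add: zp2_add_def zp2_smult_def zp_add_def zp_mul_def zp_of_int_def zp_mod_simps)
  qed
  then show thesis using that y by blast
qed

lemma psi_image_contains_power:
  assumes g: "g \<in> hurwitz" and h: "h \<in> hurwitz"
    and gh: "qmul g h = qsmult (of_int (p ^ K * R)) qone" and R: "coprime R p"
    and w: "w \<in> zp2 p"
  shows "zp2_smult p (zp_of_int p (p ^ K)) w \<in> m2_vec p (\<psi> g) ` zp2 p"
proof -
  obtain r where r: "r \<in> zp p" "zp_mul p (zp_of_int p R) r = zp_of_int p 1"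
    using zp_of_int_invertible[OF p_gt_1 R] by blast
  have rw: "zp2_smult p r w \<in> zp2 p" using zp2_smult_closed[OF p_gt_1 r(1) w] .
  have "m2_vec p (\<psi> g) (m2_vec p (\<psi> h) (zp2_smult p r w))
      = zp2_smult p (zp_of_int p (p ^ K * R)) (zp2_smult p r w)"
    by (simp only: psi_qmul[OF g h, symmetric] gh psi_qsmult[OF hurwitz_qone rw] psi_qone[OF rw])
  also have "\<dots> = zp2_smult p (zp_of_int p (p ^ K)) w"
  proof -
    have "zp2_smult p (zp_of_int p R) (zp2_smult p r w) = w"
      by (simp only: zp2_smult_smult r(2) zp2_smult_one[OF w])
    then show ?thesis by (simp only: zp2_smult_of_int_mult)
  qed
  finally show ?thesis using psi_vec_closed[OF h rw] by (metis image_eqI)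
qed

lemma lattice_approximation:
  assumes L: "zp_lattice p L" and pK: "\<forall>w\<in>zp2 p. zp2_smult p (zp_of_int p (p ^ K)) w \<in> L"
    and v: "v \<in> L"
  obtains y where "y \<in> hurwitz" "\<forall>u\<in>zp2 p. m2_vec p (\<psi> y) u \<in> L"
    "\<exists>z\<in>zp2 p. m2_vec p (\<psi> y) (zp_of_int p 1, zp_of_int p 0)
       = zp2_add p v (zp2_smult p (zp_of_int p (p ^ K)) z)"
proof -
  have vz: "v \<in> zp2 p" using v zp_lattice_subset[OF L] by blast
  define M where "M = M2 (fst v) (zp_of_int p 0) (snd v) (zp_of_int p 0)"
  have "M \<in> m2_carrier p"
    unfolding M_def m2_carrier_def using vz zp_of_int_closed[OF p_gt_1] by auto
  then obtain y where y: "y \<in> hurwitz" and approx: "\<And>u. u \<in> zp2 p \<Longrightarrow> \<exists>z\<in>zp2 p.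
      m2_vec p (\<psi> y) u = zp2_add p (m2_vec p M u) (zp2_smult p (zp_of_int p (p ^ K)) z)"
    using hurwitz_dense by blast
  have Mu: "m2_vec p M u = zp2_smult p (fst u) v" for u
    unfolding M_def m2_vec_column by simp
  have "m2_vec p (\<psi> y) u \<in> L" if u: "u \<in> zp2 p" for u
  proof -
    obtain z where "z \<in> zp2 p"
      "m2_vec p (\<psi> y) u = zp2_add p (zp2_smult p (fst u) v) (zp2_smult p (zp_of_int p (p ^ K)) z)"
      using approx[OF u] unfolding Mu by blast
    then show ?thesis
      using zp_lattice_add[OF L zp_lattice_smult[OF L _ v] bspec[OF pK]] u by auto
  qed
  moreover have "m2_vec p M (zp_of_int p 1, zp_of_int p 0) = v"
    using zp2_smult_one[OF vz] by (simp add: Mu)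
  moreover have "(zp_of_int p 1, zp_of_int p 0) \<in> zp2 p"
    using zp_of_int_closed[OF p_gt_1] by blast
  ultimately show thesis using that y approx by metis
qed

text \<open>The hypothesis \<open>divides\<close> is where the other primes of S enter: R will be a p-adic unit
  divisible by high powers of the other primes, so that multiplying by R makes the local
  conditions there automatic.\<close>
lemma psi_image_eq_lattice:
  assumes L: "zp_lattice p L" and pK: "\<forall>w\<in>zp2 p. zp2_smult p (zp_of_int p (p ^ K)) w \<in> L"
    and R: "coprime R p"
    and g: "g \<in> hurwitz" and h: "h \<in> hurwitz" and gh: "qmul g h = qsmult (of_int (p ^ K * R)) qone"
    and gL: "\<forall>u\<in>zp2 p. m2_vec p (\<psi> g) u \<in> L"
    and divides: "\<And>y. y \<in> hurwitz \<Longrightarrow> \<forall>u\<in>zp2 p. m2_vec p (\<psi> y) u \<in> L \<Longrightarrow>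
      \<exists>r\<in>hurwitz. qsmult (of_int R) y = qmul g r"
  shows "m2_vec p (\<psi> g) ` zp2 p = L"
proof
  show "m2_vec p (\<psi> g) ` zp2 p \<subseteq> L" using gL by blast
  let ?Img = "m2_vec p (\<psi> g) ` zp2 p"
  let ?pK = "zp2_smult p (zp_of_int p (p ^ K))"
  show "L \<subseteq> ?Img"
  proof
    fix v assume v: "v \<in> L"
    have vz: "v \<in> zp2 p" using v zp_lattice_subset[OF L] by blast
    obtain s where s: "s \<in> zp p" "zp_mul p (zp_of_int p R) s = zp_of_int p 1"
      using zp_of_int_invertible[OF p_gt_1 R] by blast
    define v' where "v' = zp2_smult p s v"
    have Rv': "zp2_smult p (zp_of_int p R) v' = v"
      unfolding v'_def zp2_smult_smult s(2) using zp2_smult_one[OF vz] .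
    obtain y z where y: "y \<in> hurwitz" "\<forall>u\<in>zp2 p. m2_vec p (\<psi> y) u \<in> L"
      and z: "z \<in> zp2 p"
      and ye: "m2_vec p (\<psi> y) (zp_of_int p 1, zp_of_int p 0) = zp2_add p v' (?pK z)"
      using lattice_approximation[OF L pK zp_lattice_smult[OF L s(1) v], folded v'_def] by metis
    obtain r where r: "r \<in> hurwitz" "qsmult (of_int R) y = qmul g r" using divides[OF y] by blast
    define T where "T = ?pK (zp2_smult p (zp_of_int p R) z)"
    have e1: "(zp_of_int p 1, zp_of_int p 0) \<in> zp2 p" using zp_of_int_closed[OF p_gt_1] by blast
    have "zp2_add p v T = m2_vec p (\<psi> (qsmult (of_int R) y)) (zp_of_int p 1, zp_of_int p 0)"
      by (simp only: psi_qsmult[OF y(1) e1] ye zp2_smult_add_right Rv' T_def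
          zp2_smult_of_int_mult[symmetric] mult.commute)
    also have "\<dots> \<in> ?Img"
      unfolding r(2) psi_qmul[OF g r(1)] using psi_vec_closed[OF r(1) e1] by (rule imageI)
    finally have vT: "zp2_add p v T \<in> ?Img" .
    have T: "T \<in> ?Img" unfolding T_def
      by (rule psi_image_contains_power[OF g h gh R
            zp2_smult_closed[OF p_gt_1 zp_of_int_closed[OF p_gt_1] z]])
    have "v = zp2_add p (zp2_add p v T) (zp2_smult p (zp_of_int p (-1)) T)"
      using zp2_add_diff_cancel[OF vz] by simp
    also have "\<dots> \<in> ?Img"
      by (rule m2_image_add[OF p_gt_1 vT m2_image_smult[OF p_gt_1 zp_of_int_closed[OF p_gt_1] T]])
    finally show "v \<in> ?Img" .
  qed
qed

end

section \<open>Vertex transitivity\<close>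

lemma coprime_prod_remove:
  assumes "finite S" "\<forall>q\<in>S. prime q" "p \<in> S"
  shows "coprime (\<Prod>q\<in>S - {p}. q) (p::nat)"
  using assms by (intro prod_coprime_left) (auto intro: primes_coprime)

lemma mS_pos: "\<forall>p\<in>S. prime p \<Longrightarrow> mS S > 0"
  unfolding mS_def by (simp add: prod_pos prime_gt_0_nat)

lemma GammaS_if_divides_mS_power:
  assumes g: "g \<in> hurwitz" "g \<noteq> qzero" and h: "h \<in> hurwitz"
    and gh: "qmul g h = qsmult (of_nat (mS S ^ k)) qone" and S: "\<forall>p\<in>S. prime p"
  shows "g \<in> GammaS S"
proof -
  have in_OS: "qsmult (1 / of_nat (mS S ^ j)) x \<in> OS S" if "x \<in> hurwitz" for x j
    unfolding OS_def using that by blast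
  have m: "mS S > 0" using mS_pos[OF S] .
  define h' where "h' = qsmult (1 / of_nat (mS S ^ k)) h"
  have "qmul h g = qsmult (of_nat (mS S ^ k)) qone"
    using qmul_right_inverse_imp_left[OF gh g(2)] .
  then have "qmul g h' = qone" "qmul h' g = qone"
    using gh m by (simp_all add: h'_def qmul_qsmult_right qmul_qsmult_left qsmult_qsmult)
  moreover have "g \<in> OS S" using in_OS[OF g(1), of 0] by simp
  moreover have "h' \<in> OS S" unfolding h'_def using in_OS[OF h] .
  ultimately show ?thesis unfolding GammaS_def by blast
qed

lemma maps_vertex_scalar_multiple:
  assumes psi: "hurwitz_splitting (int p) \<psi>" and p: "prime p"
    and L: "zp_lattice (int p) L" and g: "g \<in> hurwitz"
    and img: "m2_vec (int p) (\<psi> g) ` zp2 (int p) = L" and c: "c \<in> ZS_units S"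
  shows "maps_vertex S p \<psi> (qsmult c g) (zp_std (int p)) L"
proof -
  interpret hurwitz_splitting "int p" \<psi> by (rule psi)
  obtain a j where a: "c = of_int a / of_nat (mS S ^ j)" and "c \<noteq> 0"
    using c unfolding ZS_units_def ZS_def by blast
  then have "a \<noteq> 0" "(of_nat (mS S ^ j) :: rat) \<noteq> 0" by auto
  then have e: "qsmult (of_nat (mS S ^ j)) (qsmult c g) = qsmult (of_int a) g"
    by (simp add: a qsmult_qsmult)
  have "m2_vec (int p) (\<psi> (qsmult (of_int a) g)) ` zp_std (int p)
      = zp2_smult (int p) (zp_of_int (int p) a) ` L"
    unfolding img[symmetric] zp_std_def image_image using psi_qsmult[OF g] by simp
  then have "homothetic (int p) (m2_vec (int p) (\<psi> (qsmult (of_int a) g)) ` zp_std (int p)) L"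
    using homothetic_smult[OF _ L \<open>a \<noteq> 0\<close>] p by simp
  then have "qsmult (of_nat (mS S ^ j)) (qsmult c g) \<in> hurwitz \<and> homothetic (int p)
      (m2_vec (int p) (\<psi> (qsmult (of_nat (mS S ^ j)) (qsmult c g))) ` zp_std (int p)) L"
    unfolding e using hurwitz_qsmult[OF g] by blast
  then show ?thesis unfolding maps_vertex_def by blast
qed

locale S_vertex =
  fixes S :: "nat set" and \<psi> :: "nat \<Rightarrow> quat \<Rightarrow> m2" and L :: "nat \<Rightarrow> (zp_elt \<times> zp_elt) set"
  assumes finite_S: "finite S" and primes: "\<forall>p\<in>S. prime p"
    and splitting: "\<forall>p\<in>S. odd p \<longrightarrow> hurwitz_iso (int p) (\<psi> p)"
    and lattice: "\<forall>p\<in>S. odd p \<longrightarrow> zp_lattice (int p) (L p)"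
begin

abbreviation odd_S :: "nat set" where "odd_S \<equiv> {p \<in> S. odd p}"

lemma hurwitz_splitting_at: assumes "p \<in> odd_S" shows "hurwitz_splitting (int p) (\<psi> p)"
proof
  show "int p > 1" using primes assms prime_gt_1_nat by simp
  show "hurwitz_iso (int p) (\<psi> p)" using splitting assms by blast
qed

lemma lattice_at: "p \<in> odd_S \<Longrightarrow> zp_lattice (int p) (L p)"
  using lattice by blast

abbreviation contains_power :: "nat \<Rightarrow> bool" where
  "contains_power K \<equiv>
     \<forall>p\<in>odd_S. \<forall>w\<in>zp2 (int p). zp2_smult (int p) (zp_of_int (int p) (int p ^ K)) w \<in> L p"

lemma lattices_contain_power: "\<exists>K. contains_power K"
proof -
  have "\<forall>p\<in>odd_S. \<exists>n. \<forall>w\<in>zp2 (int p). zp2_smult (int p) (zp_of_int (int p) (int p ^ n)) w \<in> L p"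
    using zp_lattice_contains_power[OF lattice_at] by (intro ballI)
  from bchoice[OF this] obtain n where n: "\<forall>p\<in>odd_S.
      \<forall>w\<in>zp2 (int p). zp2_smult (int p) (zp_of_int (int p) (int p ^ n p)) w \<in> L p"
    by (elim exE)
  have "contains_power (\<Sum>q\<in>odd_S. n q)"
  proof (intro ballI)
    fix p w assume p: "p \<in> odd_S" and w: "w \<in> zp2 (int p)"
    have "n p \<le> (\<Sum>q\<in>odd_S. n q)" using finite_S p by (intro member_le_sum) auto
    then have "int p ^ n p dvd int p ^ (\<Sum>q\<in>odd_S. n q)" by (rule le_imp_power_dvd)
    then show "zp2_smult (int p) (zp_of_int (int p) (int p ^ (\<Sum>q\<in>odd_S. n q))) w \<in> L p"
      by (rule contains_power_multiple[OF hurwitz_splitting.p_gt_1[OF hurwitz_splitting_at[OF p]]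
            bspec[OF n p] _ w])
  qed
  then show ?thesis ..
qed

definition lattice_ideal :: "quat set" where
  "lattice_ideal = {x \<in> hurwitz. \<forall>p\<in>odd_S. \<forall>u\<in>zp2 (int p). m2_vec (int p) (\<psi> p x) u \<in> L p}"

lemma lattice_ideal_subset: "lattice_ideal \<subseteq> hurwitz"
  unfolding lattice_ideal_def by blast

lemma lattice_ideal_diff:
  assumes x: "x \<in> lattice_ideal" and y: "y \<in> lattice_ideal"
  shows "qsub x y \<in> lattice_ideal"
proof -
  have "m2_vec (int p) (\<psi> p (qsub x y)) u \<in> L p" if p: "p \<in> odd_S" and u: "u \<in> zp2 (int p)" for p u
  proof -
    interpret hurwitz_splitting "int p" "\<psi> p" by (rule hurwitz_splitting_at[OF p])
    show ?thesis
      using x y p u lattice_at[OF p] zp_of_int_closed[OF p_gt_1]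
      by (auto simp: lattice_ideal_def psi_qsub intro!: zp_lattice_add zp_lattice_smult)
  qed
  then show ?thesis using x y hurwitz_qsub unfolding lattice_ideal_def by auto
qed

lemma lattice_ideal_mult:
  assumes x: "x \<in> lattice_ideal" and r: "r \<in> hurwitz"
  shows "qmul x r \<in> lattice_ideal"
proof -
  have "m2_vec (int p) (\<psi> p (qmul x r)) u \<in> L p" if p: "p \<in> odd_S" and u: "u \<in> zp2 (int p)" for p u
  proof -
    interpret hurwitz_splitting "int p" "\<psi> p" by (rule hurwitz_splitting_at[OF p])
    show ?thesis
      using x p psi_vec_closed[OF r u] by (auto simp: lattice_ideal_def psi_qmul[OF _ r])
  qed
  then show ?thesis using x r hurwitz_qmul unfolding lattice_ideal_def by auto
qed

lemma lattice_ideal_smult: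
  assumes K: "contains_power K" and y: "y \<in> hurwitz"
    and a: "\<And>q. q \<in> odd_S \<Longrightarrow> int q ^ K dvd a \<or> (\<forall>u\<in>zp2 (int q). m2_vec (int q) (\<psi> q y) u \<in> L q)"
  shows "qsmult (of_int a) y \<in> lattice_ideal"
proof -
  have "m2_vec (int q) (\<psi> q (qsmult (of_int a) y)) u \<in> L q"
    if q: "q \<in> odd_S" and u: "u \<in> zp2 (int q)" for q u
  proof -
    interpret hurwitz_splitting "int q" "\<psi> q" by (rule hurwitz_splitting_at[OF q])
    from a[OF q] show ?thesis
      unfolding psi_qsmult[OF y u]
    proof
      assume "int q ^ K dvd a"
      then show "zp2_smult (int q) (zp_of_int (int q) a) (m2_vec (int q) (\<psi> q y) u) \<in> L q"
        by (rule contains_power_multiple[OF p_gt_1 bspec[OF K q] _ psi_vec_closed[OF y u]])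
    next
      assume "\<forall>u\<in>zp2 (int q). m2_vec (int q) (\<psi> q y) u \<in> L q"
      then show "zp2_smult (int q) (zp_of_int (int q) a) (m2_vec (int q) (\<psi> q y) u) \<in> L q"
        using zp_lattice_smult[OF lattice_at[OF q] zp_of_int_closed[OF p_gt_1]] u by blast
    qed
  qed
  then show ?thesis using hurwitz_qsmult[OF y] unfolding lattice_ideal_def by blast
qed

lemma mS_eq: "p \<in> S \<Longrightarrow> mS S = p * (\<Prod>q\<in>S - {p}. q)"
  unfolding mS_def using prod.remove[OF finite_S] by blast

lemma psi_generator_image:
  assumes K: "contains_power K" and p: "p \<in> odd_S"
    and g: "g \<in> lattice_ideal" and gen: "\<forall>x\<in>lattice_ideal. \<exists>r\<in>hurwitz. x = qmul g r"
    and h: "h \<in> hurwitz" and gh: "qmul g h = qsmult (of_nat (mS S ^ K)) qone"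
  shows "m2_vec (int p) (\<psi> p g) ` zp2 (int p) = L p"
proof -
  interpret hurwitz_splitting "int p" "\<psi> p" by (rule hurwitz_splitting_at[OF p])
  define R where "R = int ((\<Prod>q\<in>S - {p}. q) ^ K)"
  have R: "coprime R (int p)"
    unfolding R_def coprime_int_iff using coprime_prod_remove[OF finite_S primes] p by simp
  have "qmul g h = qsmult (of_int (int p ^ K * R)) qone"
    using gh mS_eq[of p] p by (simp add: R_def power_mult_distrib)
  moreover have "\<exists>r\<in>hurwitz. qsmult (of_int R) y = qmul g r"
    if y: "y \<in> hurwitz" "\<forall>u\<in>zp2 (int p). m2_vec (int p) (\<psi> p y) u \<in> L p" for y
  proof (intro gen[rule_format] lattice_ideal_smult[OF K y(1)])
    fix q assume q: "q \<in> odd_S"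
    have "int q ^ K dvd R" if "q \<noteq> p"
      unfolding R_def of_nat_power using q that finite_S
      by (intro dvd_power_same) (simp add: dvd_prodI)
    then show "int q ^ K dvd R \<or> (\<forall>u\<in>zp2 (int q). m2_vec (int q) (\<psi> q y) u \<in> L q)"
      using y(2) by blast
  qed
  ultimately show ?thesis
    using psi_image_eq_lattice[OF lattice_at[OF p] bspec[OF K p] R lattice_ideal_subset[THEN subsetD, OF g] h]
      g p unfolding lattice_ideal_def by blast
qed

lemma exists_vertex_transporter:
  "\<exists>g\<in>GammaS S \<inter> hurwitz. \<forall>p\<in>odd_S. m2_vec (int p) (\<psi> p g) ` zp2 (int p) = L p"
proof -
  obtain K where K: "contains_power K" using lattices_contain_power ..
  define N where "N = qsmult (of_nat (mS S ^ K)) qone"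
  have "qsmult (of_int (int (mS S ^ K))) qone \<in> lattice_ideal"
  proof (rule lattice_ideal_smult[OF K hurwitz_qone])
    fix q assume q: "q \<in> odd_S"
    have "int q ^ K dvd int (mS S ^ K)" using mS_eq[of q] q by (simp add: power_mult_distrib)
    then show "int q ^ K dvd int (mS S ^ K) \<or>
        (\<forall>u\<in>zp2 (int q). m2_vec (int q) (\<psi> q qone) u \<in> L q)" ..
  qed
  then have N: "N \<in> lattice_ideal" unfolding N_def by simp
  have N0: "N \<noteq> qzero"
    using mS_pos[OF primes] unfolding N_def qone_def qzero_def by simp
  obtain g where g: "g \<in> lattice_ideal" "g \<noteq> qzero"
    and gen: "\<forall>x\<in>lattice_ideal. \<exists>r\<in>hurwitz. x = qmul g r"
    by (rule hurwitz_right_ideal_principal[OF lattice_ideal_subset lattice_ideal_diff lattice_ideal_mult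
          N N0])
  from bspec[OF gen N] obtain h where h: "h \<in> hurwitz" "qmul g h = N"
    by auto
  have "g \<in> hurwitz" using g(1) lattice_ideal_subset by blast
  moreover have "g \<in> GammaS S"
    by (rule GammaS_if_divides_mS_power[OF \<open>g \<in> hurwitz\<close> g(2) h(1) _ primes])
      (simp add: h(2) N_def)
  moreover have "m2_vec (int p) (\<psi> p g) ` zp2 (int p) = L p" if "p \<in> odd_S" for p
    by (rule psi_generator_image[OF K that g(1) gen h(1)]) (simp add: h(2) N_def)
  ultimately show ?thesis by blast
qed

lemma coset_maps_vertex:
  assumes g: "g \<in> hurwitz" and img: "\<forall>p\<in>odd_S. m2_vec (int p) (\<psi> p g) ` zp2 (int p) = L p"
    and c: "c \<in> ZS_units S"
  shows "\<forall>p\<in>S. odd p \<longrightarrow> maps_vertex S p (\<psi> p) (qsmult c g) (zp_std (int p)) (L p)"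
proof (intro ballI impI)
  fix p assume "p \<in> S" "odd p"
  then have p: "p \<in> odd_S" by blast
  show "maps_vertex S p (\<psi> p) (qsmult c g) (zp_std (int p)) (L p)"
    using maps_vertex_scalar_multiple[OF hurwitz_splitting_at[OF p] _ lattice_at[OF p] g
        bspec[OF img p] c] primes p by blast
qed

end

lemma one_in_ZS_units: "1 \<in> ZS_units S"
proof -
  have "(1::rat) \<in> ZS S"
    unfolding ZS_def by (rule CollectI, rule exI[of _ 1], rule exI[of _ 0]) simp
  then show ?thesis unfolding ZS_units_def by simp
qed

theorem theorem2p1:
  fixes S :: "nat set"
    and \<psi> :: "nat \<Rightarrow> quat \<Rightarrow> m2"
    and L :: "nat \<Rightarrow> (zp_elt \<times> zp_elt) set"
  assumes "finite S"
    and "\<forall>p\<in>S. prime p"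
    and "\<forall>p\<in>S. odd p \<longrightarrow> hurwitz_iso (int p) (\<psi> p)"
    and "\<forall>p\<in>S. odd p \<longrightarrow> zp_lattice (int p) (L p)"
  shows "(\<exists>g\<in>GammaS S. \<forall>p\<in>S. odd p \<longrightarrow> maps_vertex S p (\<psi> p) g (zp_std (int p)) (L p))
       \<and> (\<exists>C\<in>GammaBarS S. \<forall>g\<in>C. \<forall>p\<in>S. odd p \<longrightarrow>
              maps_vertex S p (\<psi> p) g (zp_std (int p)) (L p))"
proof -
  interpret S_vertex S \<psi> L using assms by unfold_locales
  obtain g where g: "g \<in> GammaS S \<inter> hurwitz"
    and img: "\<forall>p\<in>odd_S. m2_vec (int p) (\<psi> p g) ` zp2 (int p) = L p"
    using exists_vertex_transporter by blast
  note maps = coset_maps_vertex[OF _ img]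
  show ?thesis
  proof (intro conjI bexI)
    show "\<forall>p\<in>S. odd p \<longrightarrow> maps_vertex S p (\<psi> p) g (zp_std (int p)) (L p)"
      using maps[OF _ one_in_ZS_units] g by simp
    show "\<forall>h\<in>(\<lambda>c. qsmult c g) ` ZS_units S.
        \<forall>p\<in>S. odd p \<longrightarrow> maps_vertex S p (\<psi> p) h (zp_std (int p)) (L p)"
      using maps g by blast
    show "(\<lambda>c. qsmult c g) ` ZS_units S \<in> GammaBarS S"
      unfolding GammaBarS_def using g by blast
  qed (use g in blast)
qed

end
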